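(* Let $A$ be a finite alphabet. Every infinite LSP word over $A$ is $S_{\rm bLSP}(A)$-adic.
   Context: A finite word $u$ is a left special factor of a word $w$ if there are distinct letters $x\neq y$ with $xu$ and $yu$ factors of $w$. A word is LSP if every left special factor of it is a prefix of it. A bLSP morphism on $A$ is an endomorphism $f$ of $A^*$ such that there is a letter $\alpha$ with $f(\alpha)=\alpha$ and, for every letter $\beta\neq\alpha$, there is a letter $\gamma$ with $f(\beta)=f(\gamma)\beta$; $S_{\rm bLSP}(A)$ is the set of all such morphisms. For a set $S$ of morphisms, an infinite word $\mathbf{w}$ is $S$-adic if there exist $(f_n)_{n\ge1}$ in $S$ and infinite words $(\mathbf{w}_n)_{n\ge1}$ with $\mathbf{w}_1=\mathbf{w}$ and $\mathbf{w}_n=f_n(\mathbf{w}_{n+1})$ for all $n\ge1$. *)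

theory Defs
  imports Main
begin

text \<open>Infinite words over an alphabet are functions nat => 'a; finite words are lists.
A morphism of A* is given by its letter images f :: 'a => 'a list.\<close>

definition inf_word_over :: "'a set \<Rightarrow> (nat \<Rightarrow> 'a) \<Rightarrow> bool" where
  "inf_word_over A w \<longleftrightarrow> (\<forall>n. w n \<in> A)"

definition factor :: "'a list \<Rightarrow> (nat \<Rightarrow> 'a) \<Rightarrow> bool" where
  "factor u w \<longleftrightarrow> (\<exists>i. u = map w [i..<i + length u])"

definition left_special :: "'a list \<Rightarrow> (nat \<Rightarrow> 'a) \<Rightarrow> bool" where
  "left_special u w \<longleftrightarrow> (\<exists>x y. x \<noteq> y \<and> factor (x # u) w \<and> factor (y # u) w)"

definition is_prefix :: "'a list \<Rightarrow> (nat \<Rightarrow> 'a) \<Rightarrow> bool" where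
  "is_prefix u w \<longleftrightarrow> u = map w [0..<length u]"

definition LSP :: "(nat \<Rightarrow> 'a) \<Rightarrow> bool" where
  "LSP w \<longleftrightarrow> (\<forall>u. left_special u w \<longrightarrow> is_prefix u w)"

definition img_prefix :: "('a \<Rightarrow> 'a list) \<Rightarrow> (nat \<Rightarrow> 'a) \<Rightarrow> nat \<Rightarrow> 'a list" where
  "img_prefix f v n = concat (map f (map v [0..<n]))"

definition inf_image :: "('a \<Rightarrow> 'a list) \<Rightarrow> (nat \<Rightarrow> 'a) \<Rightarrow> (nat \<Rightarrow> 'a) \<Rightarrow> bool" where
  "inf_image f v w \<longleftrightarrow>
     (\<forall>n. \<forall>i < length (img_prefix f v n). w i = img_prefix f v n ! i) \<and>
     (\<forall>m. \<exists>n. m < length (img_prefix f v n))"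

definition S_bLSP :: "'a set \<Rightarrow> ('a \<Rightarrow> 'a list) set" where
  "S_bLSP A = {f. (\<forall>a\<in>A. set (f a) \<subseteq> A) \<and>
      (\<exists>\<alpha>\<in>A. f \<alpha> = [\<alpha>] \<and> (\<forall>\<beta>\<in>A. \<beta> \<noteq> \<alpha> \<longrightarrow> (\<exists>\<gamma>\<in>A. f \<beta> = f \<gamma> @ [\<beta>])))}"

text \<open>S-adic (sequences indexed from 0 instead of 1).\<close>
definition S_adic :: "'a set \<Rightarrow> ('a \<Rightarrow> 'a list) set \<Rightarrow> (nat \<Rightarrow> 'a) \<Rightarrow> bool" where
  "S_adic A S w \<longleftrightarrow> (\<exists>fs ws. ws 0 = w \<and>
      (\<forall>n. fs n \<in> S \<and> inf_word_over A (ws n) \<and> inf_image (fs n) (ws (Suc n)) (ws n)))"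

end

theory Submission
  imports Defs
begin

text \<open>Let \<open>\<alpha>\<close> be the first letter of the LSP word \<open>w\<close>. A letter \<open>\<beta> \<noteq> \<alpha>\<close> is not a prefix of \<open>w\<close>,
so it is not left special: all its occurrences are preceded by the same letter. Hence the
factor of \<open>w\<close> running from the last \<open>\<alpha>\<close> before an occurrence of \<open>\<beta>\<close> up to that occurrence
depends only on \<open>\<beta>\<close>; calling it \<open>f(\<beta>)\<close> gives a bLSP morphism, with \<open>f(\<beta>) = f(\<gamma>)\<beta>\<close> for the
left neighbour \<open>\<gamma>\<close> of \<open>\<beta>\<close>. These blocks have bounded length over a finite alphabet, so \<open>\<alpha>\<close>
recurs, and cutting \<open>w\<close> in front of every \<open>\<alpha>\<close> writes \<open>w = f(v)\<close>, where \<open>v\<close> lists the last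
letters of the blocks. A left special factor \<open>xu\<close> of \<open>v\<close> lifts to the left special factor
\<open>f(u)\<alpha>\<close> of \<open>w\<close>, which is therefore a prefix of \<open>w\<close>; since \<open>\<alpha>\<close> marks the block boundaries,
\<open>u\<close> is a prefix of \<open>v\<close>. So \<open>v\<close> is again LSP and the construction can be iterated.\<close>

lemma LSP_left_neighbour_unique:
  assumes "LSP w" "w (Suc i) = w (Suc j)" "w (Suc i) \<noteq> w 0"
  shows "w i = w j"
proof (rule ccontr)
  assume ne: "w i \<noteq> w j"
  have "factor [w i, w (Suc i)] w" unfolding factor_def
    by (rule exI[of _ i]) (simp add: upt_conv_Cons)
  moreover have "factor [w j, w (Suc i)] w" unfolding factor_def
    by (rule exI[of _ j]) (simp add: upt_conv_Cons assms(2))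
  ultimately have "left_special [w (Suc i)] w" unfolding left_special_def using ne by blast
  then have "is_prefix [w (Suc i)] w" using assms(1) unfolding LSP_def by blast
  then show False using assms(3) unfolding is_prefix_def by simp
qed

fun block_upto :: "(nat \<Rightarrow> 'a) \<Rightarrow> nat \<Rightarrow> 'a list" where
  "block_upto w 0 = [w 0]"
| "block_upto w (Suc j) = (if w (Suc j) = w 0 then [w 0] else block_upto w j @ [w (Suc j)])"

lemma block_upto_ne: "block_upto w j \<noteq> []"
  by (cases j) auto

lemma last_block_upto: "last (block_upto w j) = w j"
  by (cases j) auto

lemma hd_block_upto: "hd (block_upto w j) = w 0"
  by (induction j) (auto simp: block_upto_ne)

lemma head_notin_tl_block_upto: "w 0 \<notin> set (tl (block_upto w j))"
  by (induction j) (auto simp: block_upto_ne tl_append split: list.splits)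

lemma set_block_upto: "set (block_upto w j) \<subseteq> range w"
  by (induction j) auto

lemma block_upto_eq_map:
  assumes "a \<le> j" "w a = w 0" "\<And>k. a < k \<Longrightarrow> k \<le> j \<Longrightarrow> w k \<noteq> w 0"
  shows "block_upto w j = map w [a..<Suc j]"
  using assms
proof (induction j)
  case (Suc j)
  show ?case
  proof (cases "a = Suc j")
    case True
    then show ?thesis using Suc.prems by (cases a) auto
  next
    case False
    then have "a \<le> j" using Suc.prems by simp
    then show ?thesis using Suc.IH Suc.prems by auto
  qed
qed simp

lemma length_block_upto_ge:
  assumes "\<And>k. i < k \<Longrightarrow> w k \<noteq> w 0"
  shows "Suc d \<le> length (block_upto w (i + d))"
  using assms by (induction d) (auto simp: block_upto_ne Suc_le_eq)

lemma LSP_block_upto_eq: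
  assumes "LSP w" "w j = w j'"
  shows "block_upto w j = block_upto w j'"
  using assms(2)
proof (induction j arbitrary: j')
  case 0
  then show ?case by (cases j') auto
next
  case (Suc j)
  show ?case
  proof (cases "w (Suc j) = w 0")
    case True
    then show ?thesis using Suc.prems by (cases j') auto
  next
    case False
    then obtain j'' where j': "j' = Suc j''" using Suc.prems by (cases j') auto
    then have "w j = w j''" using LSP_left_neighbour_unique[OF assms(1), of j j''] Suc.prems False by simp
    then show ?thesis using Suc.IH j' Suc.prems False by simp
  qed
qed

text \<open>Letters that do not occur in \<open>w\<close> are sent to \<open>w 0\<close> followed by themselves, which keeps
the morphism bLSP.\<close>

definition block_morphism :: "(nat \<Rightarrow> 'a) \<Rightarrow> 'a \<Rightarrow> 'a list" where
  "block_morphism w a = (if \<exists>j. w j = a then block_upto w (SOME j. w j = a) else [w 0, a])"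

lemma block_morphism_letter:
  assumes "LSP w"
  shows "block_morphism w (w j) = block_upto w j"
proof -
  have "w (SOME j'. w j' = w j) = w j" by (rule someI[of _ j]) simp
  then have "block_upto w (SOME j'. w j' = w j) = block_upto w j"
    by (rule LSP_block_upto_eq[OF assms])
  then show ?thesis unfolding block_morphism_def by auto
qed

lemma block_morphism_shape:
  "block_morphism w a \<noteq> [] \<and> hd (block_morphism w a) = w 0 \<and> last (block_morphism w a) = a \<and>
   w 0 \<notin> set (tl (block_morphism w a))"
proof (cases "\<exists>j. w j = a")
  case True
  then have "w (SOME j. w j = a) = a" by (rule someI_ex)
  then show ?thesis unfolding block_morphism_def using True
    by (simp add: block_upto_ne hd_block_upto last_block_upto head_notin_tl_block_upto)
next
  case False
  then have "a \<noteq> w 0" by auto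
  then show ?thesis unfolding block_morphism_def using False by auto
qed

lemma block_morphism_in_S_bLSP:
  assumes "inf_word_over A w" "LSP w"
  shows "block_morphism w \<in> S_bLSP A"
proof -
  have wA: "\<And>n. w n \<in> A" using assms(1) unfolding inf_word_over_def by blast
  have head: "block_morphism w (w 0) = [w 0]" using block_morphism_letter[OF assms(2), of 0] by simp
  have "set (block_morphism w a) \<subseteq> A" if "a \<in> A" for a
  proof (cases "\<exists>j. w j = a")
    case True
    then obtain j where "w j = a" by blast
    then show ?thesis using block_morphism_letter[OF assms(2), of j] set_block_upto[of w j] wA by auto
  next
    case False
    then show ?thesis unfolding block_morphism_def using that wA by auto
  qed
  moreover have "\<exists>c\<in>A. block_morphism w b = block_morphism w c @ [b]" if "b \<noteq> w 0" for b
  proof (cases "\<exists>j. w j = b")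
    case True
    then obtain j where j: "w (Suc j) = b" using \<open>b \<noteq> w 0\<close> by (metis not0_implies_Suc)
    then have "block_morphism w b = block_upto w j @ [b]"
      using block_morphism_letter[OF assms(2), of "Suc j"] \<open>b \<noteq> w 0\<close> by simp
    then show ?thesis using block_morphism_letter[OF assms(2), of j] wA[of j] by (intro bexI) auto
  next
    case False
    then have "block_morphism w b = block_morphism w (w 0) @ [b]"
      unfolding head unfolding block_morphism_def by simp
    then show ?thesis using wA by blast
  qed
  ultimately show ?thesis
    unfolding S_bLSP_def using head wA[of 0] by (intro CollectI conjI bexI[of _ "w 0"]) auto
qed

lemma LSP_head_recurrent:
  assumes "finite A" "inf_word_over A w" "LSP w"
  shows "\<exists>k>i. w k = w 0"
proof (rule ccontr)
  assume "\<not> ?thesis"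
  then have "\<And>k. i < k \<Longrightarrow> w k \<noteq> w 0" by auto
  define M where "M = Max ((\<lambda>a. length (block_morphism w a)) ` A)"
  have "Suc M \<le> length (block_upto w (i + M))"
    by (rule length_block_upto_ge) fact
  also have "\<dots> = length (block_morphism w (w (i + M)))"
    using block_morphism_letter[OF assms(3)] by simp
  also have "\<dots> \<le> M" unfolding M_def
    using assms(1,2) unfolding inf_word_over_def by (intro Max_ge) auto
  finally show False by simp
qed

fun head_occ :: "(nat \<Rightarrow> 'a) \<Rightarrow> nat \<Rightarrow> nat" where
  "head_occ w 0 = 0"
| "head_occ w (Suc n) = (LEAST k. head_occ w n < k \<and> w k = w 0)"

declare head_occ.simps(2)[simp del]

definition derived :: "(nat \<Rightarrow> 'a) \<Rightarrow> nat \<Rightarrow> 'a" where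
  "derived w n = w (head_occ w (Suc n) - 1)"

context
  fixes w :: "nat \<Rightarrow> 'a"
  assumes head_recurrent: "\<And>i. \<exists>k>i. w k = w 0"
begin

lemma head_occ_Suc: "head_occ w n < head_occ w (Suc n) \<and> w (head_occ w (Suc n)) = w 0"
proof -
  obtain k where "head_occ w n < k \<and> w k = w 0" using head_recurrent by blast
  then show ?thesis unfolding head_occ.simps(2) by (rule LeastI)
qed

lemma head_at_head_occ: "w (head_occ w n) = w 0"
  using head_occ_Suc by (cases n) auto

lemma strict_mono_head_occ: "strict_mono (head_occ w)"
  unfolding strict_mono_Suc_iff using head_occ_Suc by blast

lemma head_occ_Suc_eq:
  assumes "map w [head_occ w n..<head_occ w n + L] = block_morphism w a"
    and "w (head_occ w n + L) = w 0"
  shows "head_occ w (Suc n) = head_occ w n + L"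
  unfolding head_occ.simps(2)
proof (rule Least_equality)
  have "0 < L" using assms(1) block_morphism_shape[of w a] by (cases L) auto
  then show "head_occ w n < head_occ w n + L \<and> w (head_occ w n + L) = w 0"
    using assms(2) by simp
next
  fix y assume y: "head_occ w n < y \<and> w y = w 0"
  show "head_occ w n + L \<le> y"
  proof (rule ccontr)
    assume "\<not> ?thesis"
    then have k: "0 < y - head_occ w n" "y - head_occ w n < L" using y by auto
    have in_tl: "xs ! i \<in> set (tl xs)" if "0 < i" "i < length xs" for xs :: "'a list" and i
      using that by (cases xs) (auto simp: nth_Cons')
    have "w y = block_morphism w a ! (y - head_occ w n)" using y k assms(1)[symmetric] by simp
    also have "\<dots> \<in> set (tl (block_morphism w a))"
      using k arg_cong[OF assms(1), of length] by (intro in_tl) auto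
    finally show False using y block_morphism_shape[of w a] by simp
  qed
qed

context
  assumes LSP: "LSP w"
begin

lemma block_morphism_derived:
  "block_morphism w (derived w n) = map w [head_occ w n..<head_occ w (Suc n)]"
proof -
  have lt: "head_occ w n < head_occ w (Suc n)" using head_occ_Suc by blast
  have "block_morphism w (derived w n) = block_upto w (head_occ w (Suc n) - 1)"
    unfolding derived_def by (rule block_morphism_letter[OF LSP])
  also have "\<dots> = map w [head_occ w n..<Suc (head_occ w (Suc n) - 1)]"
  proof (rule block_upto_eq_map)
    fix k assume "head_occ w n < k" "k \<le> head_occ w (Suc n) - 1"
    then show "w k \<noteq> w 0"
      using not_less_Least[of k "\<lambda>k. head_occ w n < k \<and> w k = w 0"] lt
      unfolding head_occ.simps(2) by auto
  qed (use lt head_at_head_occ in auto)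
  finally show ?thesis using lt by simp
qed

lemma concat_block_morphism_derived:
  "concat (map (block_morphism w) (map (derived w) [n..<n + m])) =
   map w [head_occ w n..<head_occ w (n + m)]"
proof (induction m)
  case (Suc m)
  have "head_occ w n \<le> head_occ w (n + m)"
    using strict_mono_less_eq[OF strict_mono_head_occ] by simp
  moreover have "head_occ w (n + m) < head_occ w (Suc (n + m))" using head_occ_Suc by blast
  ultimately have "[head_occ w n..<head_occ w (n + Suc m)] =
    [head_occ w n..<head_occ w (n + m)] @ [head_occ w (n + m)..<head_occ w (Suc (n + m))]"
    using upt_add_eq_append[of "head_occ w n" "head_occ w (n + m)"
        "head_occ w (Suc (n + m)) - head_occ w (n + m)"] by simp
  then show ?case using Suc.IH block_morphism_derived[of "n + m"] by simp
qed simp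

lemma img_prefix_derived:
  "img_prefix (block_morphism w) (derived w) n = map w [0..<head_occ w n]"
  using concat_block_morphism_derived[of 0 n] by (simp add: img_prefix_def)

lemma inf_image_derived: "inf_image (block_morphism w) (derived w) w"
  unfolding inf_image_def img_prefix_derived
proof (intro conjI allI)
  fix m
  have "m \<le> head_occ w m" using strict_mono_imp_increasing[OF strict_mono_head_occ] by simp
  also have "\<dots> < head_occ w (Suc m)" using head_occ_Suc by blast
  finally show "\<exists>n. m < length (map w [0..<head_occ w n])" by auto
qed auto

text \<open>Inside the blocks \<open>w 0\<close> occurs only in front, so a factor of \<open>w\<close> that starts at an
occurrence of \<open>w 0\<close> and is followed by \<open>w 0\<close> has only one decomposition into blocks.\<close>

lemma derived_decode:
  assumes "map w [head_occ w n..<head_occ w n + length (concat (map (block_morphism w) v)) + 1] =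
           concat (map (block_morphism w) v) @ [w 0]"
  shows "v = map (derived w) [n..<n + length v]"
  using assms
proof (induction v arbitrary: n)
  case (Cons a v)
  define p where "p = head_occ w n"
  define L where "L = length (block_morphism w a)"
  define C where "C = concat (map (block_morphism w) v)"
  have "map w [p..<p + L + (length C + 1)] = block_morphism w a @ C @ [w 0]"
    using Cons.prems unfolding p_def L_def C_def by (simp add: add.assoc del: upt_Suc)
  then have "map w [p..<p + L] @ map w [p + L..<p + L + (length C + 1)] = block_morphism w a @ C @ [w 0]"
    using upt_add_eq_append[of p "p + L" "length C + 1"] by (simp del: upt_Suc)
  then have "map w [p..<p + L] = block_morphism w a \<and>
      map w [p + L..<p + L + (length C + 1)] = C @ [w 0]"
    by (subst (asm) append_eq_append_conv) (simp_all add: L_def)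
  then have block: "map w [p..<p + L] = block_morphism w a"
    and rest: "map w [p + L..<p + L + (length C + 1)] = C @ [w 0]"
    by simp_all
  have "hd (C @ [w 0]) = w 0"
    unfolding C_def by (cases v) (auto simp: block_morphism_shape)
  moreover have "w (p + L) = (C @ [w 0]) ! 0"
    using arg_cong[OF rest, of "\<lambda>xs. xs ! 0"] by (simp del: upt_Suc)
  ultimately have "w (p + L) = w 0" by (simp add: hd_conv_nth)
  then have next_occ: "head_occ w (Suc n) = p + L"
    using head_occ_Suc_eq block unfolding p_def by blast
  have "last (block_morphism w (derived w n)) = last (block_morphism w a)"
    using block_morphism_derived[of n] next_occ block unfolding p_def by simp
  then have "a = derived w n" using block_morphism_shape by metis
  moreover have "v = map (derived w) [Suc n..<Suc n + length v]"
    using Cons.IH[of "Suc n"] rest next_occ unfolding C_def by (simp add: add.assoc del: upt_Suc)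
  ultimately show ?case by (simp add: upt_conv_Cons del: upt_Suc)
qed simp

lemma factor_lift_derived:
  assumes "factor (x # u) (derived w)"
  shows "factor (x # concat (map (block_morphism w) u) @ [w 0]) w"
proof -
  obtain i where "x # u = map (derived w) [i..<i + length (x # u)]"
    using assms unfolding factor_def by (elim exE) simp
  then have x: "x = derived w i" and u: "u = map (derived w) [Suc i..<Suc i + length u]"
    by (simp_all add: upt_conv_Cons del: upt_Suc)
  define p where "p = head_occ w (Suc i) - 1"
  define q where "q = head_occ w (Suc i + length u)"
  have C: "concat (map (block_morphism w) u) = map w [head_occ w (Suc i)..<q]"
    unfolding q_def by (subst u) (rule concat_block_morphism_derived)
  have pos: "0 < head_occ w (Suc i)" using head_occ_Suc[of i] by simp
  have le: "head_occ w (Suc i) \<le> q"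
    unfolding q_def using strict_mono_less_eq[OF strict_mono_head_occ] by simp
  have "[p..<Suc q] = p # [head_occ w (Suc i)..<q] @ [q]"
    using pos le unfolding p_def by (simp add: upt_conv_Cons)
  then have "map w [p..<Suc q] = x # concat (map (block_morphism w) u) @ [w 0]"
    using C head_at_head_occ[of "Suc i + length u"] unfolding x derived_def p_def q_def by simp
  moreover have "Suc q = p + length (x # concat (map (block_morphism w) u) @ [w 0])"
    using C pos le unfolding p_def by simp
  ultimately show ?thesis unfolding factor_def by metis
qed

lemma LSP_derived: "LSP (derived w)"
  unfolding LSP_def
proof (intro allI impI)
  fix u assume "left_special u (derived w)"
  then obtain x y where "x \<noteq> y" "factor (x # u) (derived w)" "factor (y # u) (derived w)"
    unfolding left_special_def by blast
  then have "left_special (concat (map (block_morphism w) u) @ [w 0]) w"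
    unfolding left_special_def using factor_lift_derived by fastforce
  then have "is_prefix (concat (map (block_morphism w) u) @ [w 0]) w"
    using LSP unfolding LSP_def by blast
  then have "u = map (derived w) [0..<0 + length u]"
    by (intro derived_decode) (simp add: is_prefix_def)
  then show "is_prefix u (derived w)" unfolding is_prefix_def by simp
qed

end

end

lemma S_adic_by_iteration:
  assumes step: "\<And>v. P v \<Longrightarrow> \<exists>f v'. f \<in> S \<and> P v' \<and> inf_image f v' v"
    and over: "\<And>v. P v \<Longrightarrow> inf_word_over A v"
    and "P w"
  shows "S_adic A S w"
proof -
  have "\<forall>v. \<exists>fv. P v \<longrightarrow> fst fv \<in> S \<and> P (snd fv) \<and> inf_image (fst fv) (snd fv) v"
    using step by fastforce
  then obtain g where g: "\<And>v. P v \<Longrightarrow> fst (g v) \<in> S \<and> P (snd (g v)) \<and> inf_image (fst (g v)) (snd (g v)) v"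
    by metis
  define ws where "ws n = ((snd \<circ> g) ^^ n) w" for n
  have P_ws: "P (ws n)" for n
    by (induction n) (use \<open>P w\<close> g in \<open>simp_all add: ws_def\<close>)
  have "ws (Suc n) = snd (g (ws n))" for n unfolding ws_def by simp
  then have "ws 0 = w \<and> (\<forall>n. fst (g (ws n)) \<in> S \<and> inf_word_over A (ws n) \<and>
             inf_image (fst (g (ws n))) (ws (Suc n)) (ws n))"
    using g[OF P_ws] over[OF P_ws] unfolding ws_def by simp
  then show ?thesis unfolding S_adic_def by (intro exI[of _ "\<lambda>n. fst (g (ws n))"] exI[of _ ws]) simp
qed

theorem proposition1:
  fixes A :: "'a set" and w :: "nat \<Rightarrow> 'a"
  assumes "finite A" and "inf_word_over A w" and "LSP w"
  shows "S_adic A (S_bLSP A) w"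
proof (rule S_adic_by_iteration[where P = "\<lambda>v. inf_word_over A v \<and> LSP v"])
  fix v assume v: "inf_word_over A v \<and> LSP v"
  then have rec: "\<And>i. \<exists>k>i. v k = v 0" using LSP_head_recurrent[OF \<open>finite A\<close>] by blast
  have "inf_word_over A (derived v)" using v unfolding inf_word_over_def derived_def by blast
  then show "\<exists>f v'. f \<in> S_bLSP A \<and> (inf_word_over A v' \<and> LSP v') \<and> inf_image f v' v"
    using block_morphism_in_S_bLSP LSP_derived[OF rec] inf_image_derived[OF rec] v by blast
qed (use assms in auto)

end
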